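(* Let $\Sigma=\{\sigma_{\mathbf{a}|\mathbf{x}}\}$ be a no-signaling assemblage (with $n$ untrusted parties, outcome numbers $\mathcal{A}_i$, setting numbers $\mathcal{X}_i$, acting on $\mathbb{C}^d$). For each index $\mathbf{a}|\mathbf{x}$ let $R_{\mathbf{a}|\mathbf{x}}$ be the orthogonal projection onto $\mathrm{Im}(\sigma_{\mathbf{a}|\mathbf{x}})$, and let $\mathcal{L}$ be the set of all local deterministic boxes. Then $\Sigma$ is on the edge of the set of no-signaling assemblages if and only if $$\det\Big(\prod_{L\in\mathcal{L}}\Big(\prod_{\mathbf{a}|\mathbf{x}\in I_L}R_{\mathbf{a}|\mathbf{x}}-\mathbb{1}\Big)\Big)\neq 0,$$ where the (operator) products are taken in any fixed order.
   Context: Fix $n\ge 1$, integers $\mathcal{A}_i,\mathcal{X}_i\ge 1$ ($i=1,\dots,n$) and $d\ge1$. Write $\mathbf{a}|\mathbf{x}=a_1\dots a_n|x_1\dots x_n$ with $a_i\in\{0,\dots,\mathcal{A}_i-1\}$, $x_i\in\{0,\dots,\mathcal{X}_i-1\}$. A no-signaling assemblage is a collection $\Sigma=\{\sigma_{\mathbf{a}|\mathbf{x}}\}$ of positive semidefinite operators on $\mathbb{C}^d$ such that $\sum_{\mathbf{a}}\sigma_{\mathbf{a}|\mathbf{x}}=\rho_B$ for all $\mathbf{x}$, where $\rho_B$ is a fixed density operator (trace one), and for every subset $I=\{i_1,\dots,i_s\}\subset\{1,\dots,n\}$ with $1\le s<n$ the marginal $\sum_{a_j:\,j\notin I}\sigma_{\mathbf{a}|\mathbf{x}}$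 depends only on $a_{i_1},\dots,a_{i_s},x_{i_1},\dots,x_{i_s}$ (not on $x_j$, $j\notin I$). A local deterministic box $L$ is given by functions $f_i:\{0,\dots,\mathcal{X}_i-1\}\to\{0,\dots,\mathcal{A}_i-1\}$, with $p_L(\mathbf{a}|\mathbf{x})=\prod_i\delta_{a_i,f_i(x_i)}$; set $I_L=\{\mathbf{a}|\mathbf{x}: p_L(\mathbf{a}|\mathbf{x})\neq 0\}$. An assemblage admits an LHS model if $\sigma_{\mathbf{a}|\mathbf{x}}=\sum_j q_j\prod_{i=1}^n p^{(A_i)}_j(a_i|x_i)\rho_j$ with $q_j\ge0$, $\sum_j q_j=1$, density operators $\rho_j$ on $\mathbb{C}^d$ and conditional probability distributions $p^{(A_i)}_j(\cdot|x_i)$. A no-signaling assemblage $\Sigma$ is on the edge of the set of no-signaling assemblages if whenever $\Sigma=\epsilon\Sigma_1+(1-\epsilon)\Sigma_2$ with $\epsilon\in[0,1]$, $\Sigma_1$ an LHS assemblage and $\Sigma_2$ a no-signaling assemblage (same scenario), necessarily $\epsilon=0$. *)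

theory Defs
  imports "Jordan_Normal_Form.Schur_Decomposition"
begin

definition psd :: "nat \<Rightarrow> complex mat \<Rightarrow> bool" where
  "psd d M \<longleftrightarrow> M \<in> carrier_mat d d \<and> mat_adjoint M = M \<and>
     (\<forall>v \<in> carrier_vec d. 0 \<le> Re (\<Sum>i<d. \<Sum>j<d. cnj (v $ i) * M $$ (i, j) * v $ j))"

definition density :: "nat \<Rightarrow> complex mat \<Rightarrow> bool" where
  "density d M \<longleftrightarrow> psd d M \<and> (\<Sum>i<d. M $$ (i, i)) = 1"

definition msum :: "nat \<Rightarrow> 'i set \<Rightarrow> ('i \<Rightarrow> complex mat) \<Rightarrow> complex mat" where
  "msum d S f = mat d d (\<lambda>(r, c). \<Sum>k\<in>S. f k $$ (r, c))"

definition mprod :: "nat \<Rightarrow> complex mat list \<Rightarrow> complex mat" where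
  "mprod d Ms = foldr (\<lambda>M P. M * P) Ms (1\<^sub>m d)"

definition mat_image :: "complex mat \<Rightarrow> complex vec set" where
  "mat_image M = {M *\<^sub>v w | w. w \<in> carrier_vec (dim_col M)}"

definition is_orth_proj_onto :: "nat \<Rightarrow> complex mat \<Rightarrow> complex vec set \<Rightarrow> bool" where
  "is_orth_proj_onto d P S \<longleftrightarrow> P \<in> carrier_mat d d \<and> P * P = P \<and> mat_adjoint P = P \<and>
     mat_image P = S"

(* Index tuples: a = a_1..a_n as lists of length n with a!i < B i (0-based parties) *)
definition tuples :: "nat \<Rightarrow> (nat \<Rightarrow> nat) \<Rightarrow> nat list set" where
  "tuples n B = {a. length a = n \<and> (\<forall>i<n. a ! i < B i)}"

definition agree_on :: "nat set \<Rightarrow> nat list \<Rightarrow> nat list \<Rightarrow> bool" where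
  "agree_on I a b \<longleftrightarrow> (\<forall>i\<in>I. a ! i = b ! i)"

definition no_signaling ::
  "nat \<Rightarrow> (nat \<Rightarrow> nat) \<Rightarrow> (nat \<Rightarrow> nat) \<Rightarrow> nat \<Rightarrow> (nat list \<Rightarrow> nat list \<Rightarrow> complex mat) \<Rightarrow> bool" where
  "no_signaling n A X d \<sigma> \<longleftrightarrow>
     (\<forall>a\<in>tuples n A. \<forall>x\<in>tuples n X. psd d (\<sigma> a x)) \<and>
     (\<exists>\<rho>. density d \<rho> \<and> (\<forall>x\<in>tuples n X. msum d (tuples n A) (\<lambda>a. \<sigma> a x) = \<rho>)) \<and>
     (\<forall>I. I \<subseteq> {..<n} \<and> 1 \<le> card I \<and> card I < n \<longrightarrow>
        (\<forall>a\<in>tuples n A. \<forall>x\<in>tuples n X. \<forall>x'\<in>tuples n X. agree_on I x x' \<longrightarrow>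
           msum d {a'\<in>tuples n A. agree_on I a' a} (\<lambda>a'. \<sigma> a' x) =
           msum d {a'\<in>tuples n A. agree_on I a' a} (\<lambda>a'. \<sigma> a' x')))"

(* LHS model with finitely many hidden states j < m;
   p j i a x = p_j^{(A_i)}(a | x) *)
definition has_LHS ::
  "nat \<Rightarrow> (nat \<Rightarrow> nat) \<Rightarrow> (nat \<Rightarrow> nat) \<Rightarrow> nat \<Rightarrow> (nat list \<Rightarrow> nat list \<Rightarrow> complex mat) \<Rightarrow> bool" where
  "has_LHS n A X d \<sigma> \<longleftrightarrow>
     (\<exists>m (q :: nat \<Rightarrow> real) (p :: nat \<Rightarrow> nat \<Rightarrow> nat \<Rightarrow> nat \<Rightarrow> real) (\<rho> :: nat \<Rightarrow> complex mat).
        (\<forall>j<m. 0 \<le> q j) \<and> (\<Sum>j<m. q j) = 1 \<and>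
        (\<forall>j<m. density d (\<rho> j)) \<and>
        (\<forall>j<m. \<forall>i<n. \<forall>x<X i. (\<forall>a<A i. 0 \<le> p j i a x) \<and> (\<Sum>a<A i. p j i a x) = 1) \<and>
        (\<forall>a\<in>tuples n A. \<forall>x\<in>tuples n X.
           \<sigma> a x = msum d {..<m}
             (\<lambda>j. complex_of_real (q j * (\<Prod>i<n. p j i (a ! i) (x ! i))) \<cdot>\<^sub>m \<rho> j)))"

definition on_edge ::
  "nat \<Rightarrow> (nat \<Rightarrow> nat) \<Rightarrow> (nat \<Rightarrow> nat) \<Rightarrow> nat \<Rightarrow> (nat list \<Rightarrow> nat list \<Rightarrow> complex mat) \<Rightarrow> bool" where
  "on_edge n A X d \<sigma> \<longleftrightarrow>
     (\<forall>(\<epsilon>::real) \<sigma>1 \<sigma>2. 0 \<le> \<epsilon> \<and> \<epsilon> \<le> 1 \<and> has_LHS n A X d \<sigma>1 \<and> no_signaling n A X d \<sigma>2 \<and>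
        (\<forall>a\<in>tuples n A. \<forall>x\<in>tuples n X.
           \<sigma> a x = complex_of_real \<epsilon> \<cdot>\<^sub>m \<sigma>1 a x + complex_of_real (1 - \<epsilon>) \<cdot>\<^sub>m \<sigma>2 a x)
        \<longrightarrow> \<epsilon> = 0)"

(* Local deterministic boxes: L ! i is the list of values f_i(0),...,f_i(X_i - 1) *)
definition local_boxes :: "nat \<Rightarrow> (nat \<Rightarrow> nat) \<Rightarrow> (nat \<Rightarrow> nat) \<Rightarrow> nat list list set" where
  "local_boxes n A X = {L. length L = n \<and> (\<forall>i<n. length (L ! i) = X i \<and> (\<forall>x<X i. L ! i ! x < A i))}"

(* I_L: indices a|x with p_L(a|x) \<noteq> 0 *)
definition I_L :: "nat \<Rightarrow> (nat \<Rightarrow> nat) \<Rightarrow> (nat \<Rightarrow> nat) \<Rightarrow> nat list list \<Rightarrow> (nat list \<times> nat list) set" where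
  "I_L n A X L = {(a, x). a \<in> tuples n A \<and> x \<in> tuples n X \<and> (\<forall>i<n. a ! i = L ! i ! (x ! i))}"

end

theory Submission
  imports Defs
begin

(* Both sides are equivalent to the absence of a local deterministic box L together with a nonzero
   vector fixed by every projection R_{a|x} with a|x in I_L.

   For the determinant: a product of orthogonal projections is a contraction and fixes v only if
   every factor does, so det (prod_L (P_L - 1)) = 0 exactly when some product P_L has a nonzero
   fixed vector.

   Given such a vector psi, it lies in the range of every sigma_{a|x} with a|x in I_L, so by
   Cauchy-Schwarz each of these sigma_{a|x} dominates a multiple of the state |psi><psi|.  Removing
   eps p_L(a|x) |psi><psi| from sigma and renormalising leaves a no-signaling assemblage, hence
   sigma is not on the edge.

   Conversely, in a decomposition with eps > 0 take a hidden state rho_j of the LHS part with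
   q_j > 0 and a deterministic box L choosing only outcomes of positive probability under p_j.
   Then every sigma_{a|x} with a|x in I_L dominates a positive multiple of rho_j, so the range of
   rho_j lies in the range of sigma_{a|x} and is fixed by R_{a|x}. *)

section \<open>Inner products and positive semidefinite matrices\<close>

lemma minus_vec_eq_0_iff:
  fixes v w :: "'a :: group_add vec"
  assumes "v \<in> carrier_vec n" "w \<in> carrier_vec n"
  shows "v - w = 0\<^sub>v n \<longleftrightarrow> v = w"
  using assms by (auto simp: vec_eq_iff)

lemma conjugate_minus_vec:
  fixes v w :: "complex vec"
  assumes "v \<in> carrier_vec n" "w \<in> carrier_vec n"
  shows "conjugate (v - w) = conjugate v - conjugate w"
  using assms by (intro eq_vecI) auto

lemma cscalar_prod_add_right:
  fixes u v w :: "'a :: conjugatable_ring vec"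
  assumes "u \<in> carrier_vec n" "v \<in> carrier_vec n" "w \<in> carrier_vec n"
  shows "u \<bullet>c (v + w) = u \<bullet>c v + u \<bullet>c w"
  using assms by (simp add: conjugate_add_vec[of _ n] scalar_prod_add_distrib[of _ n])

lemma cscalar_prod_minus_right:
  fixes u v w :: "complex vec"
  assumes "u \<in> carrier_vec n" "v \<in> carrier_vec n" "w \<in> carrier_vec n"
  shows "u \<bullet>c (v - w) = u \<bullet>c v - u \<bullet>c w"
  using assms by (simp add: conjugate_minus_vec[of _ n] scalar_prod_minus_distrib[of _ n])

lemma cscalar_prod_smult_right:
  fixes u v :: "complex vec"
  assumes "u \<in> carrier_vec n" "v \<in> carrier_vec n"
  shows "u \<bullet>c (k \<cdot>\<^sub>v v) = cnj k * (u \<bullet>c v)"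
  using assms by (simp add: conjugate_smult_vec scalar_prod_smult_distrib[of _ n])

lemma cscalar_prod_swap:
  fixes u v :: "complex vec"
  assumes "u \<in> carrier_vec n" "v \<in> carrier_vec n"
  shows "v \<bullet>c u = cnj (u \<bullet>c v)"
  using conjugate_conjugate_sprod[OF assms] assms
  by (metis comm_scalar_prod carrier_vec_conjugate complex_cnj_cnj conjugate_complex_def)

lemma cscalar_prod_self_real:
  fixes v :: "complex vec"
  shows "v \<bullet>c v = of_real (Re (v \<bullet>c v))" "0 \<le> Re (v \<bullet>c v)"
  using conjugate_square_ge_0_vec[of v] by (auto simp: less_eq_complex_def complex_eq_iff)

lemma cscalar_prod_self_le_0_iff:
  fixes v :: "complex vec"
  assumes "v \<in> carrier_vec n"
  shows "Re (v \<bullet>c v) \<le> 0 \<longleftrightarrow> v = 0\<^sub>v n"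
proof -
  have "Re (v \<bullet>c v) \<le> 0 \<longleftrightarrow> v \<bullet>c v = 0"
    using cscalar_prod_self_real(2)[of v] by (subst (2) cscalar_prod_self_real(1)) auto
  then show ?thesis
    using conjugate_square_eq_0_vec[OF assms] by simp
qed

lemma mat_adjoint_eq_iff:
  fixes M :: "complex mat"
  assumes "M \<in> carrier_mat d d"
  shows "mat_adjoint M = M \<longleftrightarrow> (\<forall>i<d. \<forall>j<d. M $$ (j, i) = cnj (M $$ (i, j)))"
proof -
  have "mat_adjoint M \<in> carrier_mat d d"
    and "\<And>i j. i < d \<Longrightarrow> j < d \<Longrightarrow> mat_adjoint M $$ (i, j) = cnj (M $$ (j, i))"
    using assms unfolding mat_adjoint_def mat_of_rows_def by auto
  with assms show ?thesis
    by (metis (no_types, lifting) carrier_matD eq_matI)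
qed

lemma hermitian_cscalar_prod:
  fixes M :: "complex mat"
  assumes "M \<in> carrier_mat d d" "mat_adjoint M = M" "u \<in> carrier_vec d" "v \<in> carrier_vec d"
  shows "(M *\<^sub>v u) \<bullet>c v = u \<bullet>c (M *\<^sub>v v)"
proof -
  have M: "cnj (M $$ (j, i)) = M $$ (i, j)" if "i < d" "j < d" for i j
    using assms(1,2) mat_adjoint_eq_iff that by metis
  have "(M *\<^sub>v u) \<bullet>c v = (\<Sum>i<d. \<Sum>j<d. M $$ (i, j) * u $ j * cnj (v $ i))"
    using assms by (auto simp: scalar_prod_def atLeast0LessThan sum_distrib_right intro!: sum.cong)
  also have "\<dots> = (\<Sum>j<d. \<Sum>i<d. M $$ (i, j) * u $ j * cnj (v $ i))"
    by (rule sum.swap)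
  also have "\<dots> = u \<bullet>c (M *\<^sub>v v)"
    using assms by (auto simp: scalar_prod_def atLeast0LessThan sum_distrib_left M mult.commute
        intro!: sum.cong)
  finally show ?thesis .
qed

definition qform :: "complex mat \<Rightarrow> complex vec \<Rightarrow> real" where
  "qform M v = Re ((M *\<^sub>v v) \<bullet>c v)"

lemma cscalar_prod_mult_vec_expand:
  assumes "M \<in> carrier_mat d d" "v \<in> carrier_vec d"
  shows "(M *\<^sub>v v) \<bullet>c v = (\<Sum>i<d. \<Sum>j<d. cnj (v $ i) * M $$ (i, j) * v $ j)"
  using assms by (auto simp: scalar_prod_def atLeast0LessThan sum_distrib_left ac_simps
      intro!: sum.cong)

lemma psd_iff_qform:
  "psd d M \<longleftrightarrow> M \<in> carrier_mat d d \<and> mat_adjoint M = M \<and> (\<forall>v\<in>carrier_vec d. 0 \<le> qform M v)"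
  unfolding psd_def qform_def by (auto simp: cscalar_prod_mult_vec_expand)

lemma psdD:
  assumes "psd d M"
  shows "M \<in> carrier_mat d d" "mat_adjoint M = M" "\<And>v. v \<in> carrier_vec d \<Longrightarrow> 0 \<le> qform M v"
  using assms by (auto simp: psd_iff_qform)

lemma quadratic_nonneg_bound:
  fixes a b k :: real
  assumes "\<And>s. 0 \<le> a - 2 * s * k + s\<^sup>2 * k * b" "0 \<le> k" "0 \<le> b"
  shows "k \<le> a * b"
proof (cases "b = 0")
  case True
  show ?thesis
  proof (rule ccontr)
    assume "\<not> k \<le> a * b"
    with True have "0 < k" by simp
    with assms(1)[of "(a + 1) / (2 * k)"] True show False by (simp add: field_simps)
  qed
next
  case False
  with assms(3) have "0 < b" by simp
  with assms(1)[of "1 / b"] show ?thesis by (simp add: field_simps power2_eq_square)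
qed

lemma psd_cauchy_schwarz:
  assumes M: "psd d M" and u: "u \<in> carrier_vec d" and v: "v \<in> carrier_vec d"
  shows "(cmod ((M *\<^sub>v u) \<bullet>c v))\<^sup>2 \<le> qform M u * qform M v"
proof -
  note MM = psdD[OF M]
  define c where "c = (M *\<^sub>v u) \<bullet>c v"
  have Mu: "M *\<^sub>v u \<in> carrier_vec d" and Mv: "M *\<^sub>v v \<in> carrier_vec d" using MM u v by auto
  have vu: "(M *\<^sub>v v) \<bullet>c u = cnj c"
    unfolding c_def using hermitian_cscalar_prod[OF MM(1,2) v u] cscalar_prod_swap[OF Mu v] by simp
  have "0 \<le> qform M u - 2 * s * (cmod c)\<^sup>2 + s\<^sup>2 * (cmod c)\<^sup>2 * qform M v" for s :: real
  proof -
    define t where "t = - of_real s * c"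
    define w where "w = u + t \<cdot>\<^sub>v v"
    have w: "w \<in> carrier_vec d" unfolding w_def using u v by auto
    have "M *\<^sub>v w = M *\<^sub>v u + t \<cdot>\<^sub>v (M *\<^sub>v v)"
      unfolding w_def using MM u v by (simp add: mult_add_distrib_mat_vec mult_mat_vec)
    then have "(M *\<^sub>v w) \<bullet>c w = (M *\<^sub>v u) \<bullet>c u + cnj t * c + t * cnj c + t * cnj t * ((M *\<^sub>v v) \<bullet>c v)"
      unfolding w_def using u v Mu Mv
      by (simp add: add_scalar_prod_distrib[of _ d] cscalar_prod_add_right[of _ d]
          smult_scalar_prod_distrib[of _ d] cscalar_prod_smult_right[of _ d] vu flip: c_def)
        (simp add: ring_distribs ac_simps)
    moreover have "cnj t * c = - of_real s * (c * cnj c)" "t * cnj c = - of_real s * (c * cnj c)"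
      "t * cnj t = of_real s * of_real s * (c * cnj c)"
      unfolding t_def by (simp_all add: ac_simps)
    ultimately have "qform M w = qform M u - 2 * s * (cmod c)\<^sup>2 + s\<^sup>2 * (cmod c)\<^sup>2 * qform M v"
      unfolding qform_def by (simp add: complex_norm_square[symmetric] power2_eq_square)
    with psdD(3)[OF M w] show ?thesis by simp
  qed
  then have "(cmod c)\<^sup>2 \<le> qform M u * qform M v"
    by (rule quadratic_nonneg_bound) (use psdD(3)[OF M v] in auto)
  then show ?thesis unfolding c_def .
qed

lemma psd_qform_zero_imp_kernel:
  assumes M: "psd d M" and v: "v \<in> carrier_vec d" and "qform M v \<le> 0"
  shows "M *\<^sub>v v = 0\<^sub>v d"
proof -
  have Mv: "M *\<^sub>v v \<in> carrier_vec d" using psdD(1)[OF M] v by auto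
  have "(cmod ((M *\<^sub>v (M *\<^sub>v v)) \<bullet>c v))\<^sup>2 \<le> qform M (M *\<^sub>v v) * qform M v"
    by (rule psd_cauchy_schwarz[OF M Mv v])
  also have "\<dots> \<le> 0"
    using psdD(3)[OF M Mv] assms(3) by (simp add: mult_nonneg_nonpos)
  finally have "(M *\<^sub>v (M *\<^sub>v v)) \<bullet>c v = 0" by simp
  then have "(M *\<^sub>v v) \<bullet>c (M *\<^sub>v v) = 0"
    using hermitian_cscalar_prod[OF psdD(1,2)[OF M] Mv v] by simp
  then show ?thesis using conjugate_square_eq_0_vec[OF Mv] by simp
qed

lemma psd_image_bound:
  assumes S: "psd d S" and "\<psi> \<in> mat_image S"
  shows "\<exists>\<beta>. \<forall>u\<in>carrier_vec d. (cmod (u \<bullet>c \<psi>))\<^sup>2 \<le> \<beta> * qform S u"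
proof -
  note SS = psdD[OF S]
  obtain w where w: "w \<in> carrier_vec d" and \<psi>: "\<psi> = S *\<^sub>v w"
    using assms(2) SS(1) unfolding mat_image_def by auto
  have "(cmod (u \<bullet>c \<psi>))\<^sup>2 \<le> qform S w * qform S u" if u: "u \<in> carrier_vec d" for u
    using psd_cauchy_schwarz[OF S u w] hermitian_cscalar_prod[OF SS(1,2) u w] \<psi>
    by (simp add: mult.commute)
  then show ?thesis by blast
qed

lemma qform_add:
  assumes "A \<in> carrier_mat d d" "B \<in> carrier_mat d d" "u \<in> carrier_vec d"
  shows "qform (A + B) u = qform A u + qform B u"
  using assms by (simp add: qform_def add_mult_distrib_mat_vec[of _ d d] add_scalar_prod_distrib[of _ d])

lemma qform_minus:
  assumes "A \<in> carrier_mat d d" "B \<in> carrier_mat d d" "u \<in> carrier_vec d"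
  shows "qform (A - B) u = qform A u - qform B u"
  using assms by (simp add: qform_def minus_mult_distrib_mat_vec[of _ d d] minus_scalar_prod_distrib[of _ d])

lemma qform_smult:
  assumes "A \<in> carrier_mat d d" "u \<in> carrier_vec d"
  shows "qform (complex_of_real r \<cdot>\<^sub>m A) u = r * qform A u"
proof -
  have "(complex_of_real r \<cdot>\<^sub>m A) *\<^sub>v u = complex_of_real r \<cdot>\<^sub>v (A *\<^sub>v u)"
    using assms by (intro eq_vecI) (auto simp: scalar_prod_def sum_distrib_left ac_simps)
  then show ?thesis
    using assms by (simp add: qform_def smult_scalar_prod_distrib[of _ d])
qed

lemma qform_zero: "u \<in> carrier_vec d \<Longrightarrow> qform (0\<^sub>m d d) u = 0"
  by (simp add: qform_def cscalar_prod_mult_vec_expand[of _ d])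

lemma msum_dim [simp]: "dim_row (msum d S f) = d" "dim_col (msum d S f) = d"
  by (simp_all add: msum_def)

lemma msum_carrier [simp]: "msum d S f \<in> carrier_mat d d"
  by (simp add: carrier_matI)

lemma msum_index [simp]: "i < d \<Longrightarrow> j < d \<Longrightarrow> msum d S f $$ (i, j) = (\<Sum>k\<in>S. f k $$ (i, j))"
  by (simp add: msum_def)

lemma msum_cong: "(\<And>k. k \<in> S \<Longrightarrow> f k = g k) \<Longrightarrow> msum d S f = msum d S g"
  by (simp add: msum_def)

lemma msum_singleton: "f k \<in> carrier_mat d d \<Longrightarrow> msum d {k} f = f k"
  by (intro eq_matI) auto

lemma msum_delta:
  assumes "finite S" "M \<in> carrier_mat d d"
  shows "msum d S (\<lambda>k. if k = b then M else 0\<^sub>m d d) = (if b \<in> S then M else 0\<^sub>m d d)"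
  using assms by (intro eq_matI) (auto simp: if_distrib[of "\<lambda>M. M $$ _"] cong: if_cong)

lemma msum_rescaled_difference:
  assumes "\<forall>k\<in>S. f k \<in> carrier_mat d d \<and> g k \<in> carrier_mat d d"
  shows "msum d S (\<lambda>k. complex_of_real c \<cdot>\<^sub>m (f k - complex_of_real e \<cdot>\<^sub>m g k)) =
    complex_of_real c \<cdot>\<^sub>m (msum d S f - complex_of_real e \<cdot>\<^sub>m msum d S g)"
proof (intro eq_matI)
  fix i j assume "i < dim_row (complex_of_real c \<cdot>\<^sub>m (msum d S f - complex_of_real e \<cdot>\<^sub>m msum d S g))"
    "j < dim_col (complex_of_real c \<cdot>\<^sub>m (msum d S f - complex_of_real e \<cdot>\<^sub>m msum d S g))"
  then have ij: "i < d" "j < d" by simp_all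
  have "(complex_of_real c \<cdot>\<^sub>m (f k - complex_of_real e \<cdot>\<^sub>m g k)) $$ (i, j) =
      complex_of_real c * (f k $$ (i, j) - complex_of_real e * g k $$ (i, j))" if "k \<in> S" for k
    using assms that ij by auto
  then show "msum d S (\<lambda>k. complex_of_real c \<cdot>\<^sub>m (f k - complex_of_real e \<cdot>\<^sub>m g k)) $$ (i, j) =
      (complex_of_real c \<cdot>\<^sub>m (msum d S f - complex_of_real e \<cdot>\<^sub>m msum d S g)) $$ (i, j)"
    using ij by (simp add: sum_distrib_left sum_subtractf right_diff_distrib)
qed simp_all

lemma qform_msum:
  assumes "\<forall>k\<in>S. f k \<in> carrier_mat d d" "u \<in> carrier_vec d"
  shows "qform (msum d S f) u = (\<Sum>k\<in>S. qform (f k) u)"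
proof -
  have "(msum d S f *\<^sub>v u) \<bullet>c u = (\<Sum>i<d. \<Sum>j<d. \<Sum>k\<in>S. cnj (u $ i) * f k $$ (i, j) * u $ j)"
    by (subst cscalar_prod_mult_vec_expand[OF msum_carrier assms(2)])
      (simp add: sum_distrib_left sum_distrib_right)
  also have "\<dots> = (\<Sum>k\<in>S. \<Sum>i<d. \<Sum>j<d. cnj (u $ i) * f k $$ (i, j) * u $ j)"
    by (subst sum.swap) (simp add: sum.swap[of _ "{..<d}" S])
  also have "\<dots> = (\<Sum>k\<in>S. (f k *\<^sub>v u) \<bullet>c u)"
    using assms by (intro sum.cong refl) (simp add: cscalar_prod_mult_vec_expand[of _ d])
  finally show ?thesis by (simp add: qform_def)
qed

lemma qform_msum_mono:
  assumes "\<forall>k\<in>S. f k \<in> carrier_mat d d \<and> g k \<in> carrier_mat d d" "u \<in> carrier_vec d"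
    and "\<forall>k\<in>S. e * qform (g k) u \<le> qform (f k) u"
  shows "e * qform (msum d S g) u \<le> qform (msum d S f) u"
  using assms by (simp add: qform_msum[where d=d] sum_distrib_left sum_mono)

lemma qform_msum_ge_term:
  assumes "finite S" "j \<in> S" "\<forall>k\<in>S. 0 \<le> w k \<and> psd d (\<rho> k)" "u \<in> carrier_vec d"
  shows "w j * qform (\<rho> j) u \<le> qform (msum d S (\<lambda>k. complex_of_real (w k) \<cdot>\<^sub>m \<rho> k)) u"
proof -
  have "w j * qform (\<rho> j) u \<le> (\<Sum>k\<in>S. w k * qform (\<rho> k) u)"
    using assms psdD(3) by (intro member_le_sum) auto
  also have "\<dots> = qform (msum d S (\<lambda>k. complex_of_real (w k) \<cdot>\<^sub>m \<rho> k)) u"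
    using assms(3,4) psdD(1) by (simp add: qform_msum[where d=d] qform_smult[of _ d])
  finally show ?thesis .
qed

lemma psd_zero: "psd d (0\<^sub>m d d)"
  unfolding psd_def by (simp add: mat_adjoint_eq_iff[of _ d])

lemma psd_rescaled_difference:
  assumes A: "psd d A" and B: "psd d B" and "0 \<le> c"
    and dom: "\<forall>u\<in>carrier_vec d. e * qform B u \<le> qform A u"
  shows "psd d (complex_of_real c \<cdot>\<^sub>m (A - complex_of_real e \<cdot>\<^sub>m B))" (is "psd d ?M")
proof -
  note AA = psdD[OF A] and BB = psdD[OF B]
  have M: "?M \<in> carrier_mat d d" using AA(1) BB(1) by (simp add: minus_carrier_mat)
  have "?M $$ (j, i) = cnj (?M $$ (i, j))" if ij: "i < d" "j < d" for i j
  proof -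
    have "A $$ (j, i) = cnj (A $$ (i, j))" "B $$ (j, i) = cnj (B $$ (i, j))"
      using AA(1,2) BB(1,2) ij mat_adjoint_eq_iff by blast+
    then show ?thesis using AA(1) BB(1) ij by simp
  qed
  then have "mat_adjoint ?M = ?M" using mat_adjoint_eq_iff[OF M] by blast
  moreover have "0 \<le> qform ?M u" if u: "u \<in> carrier_vec d" for u
  proof -
    have "qform ?M u = c * (qform A u - e * qform B u)"
      using AA(1) BB(1) u by (simp add: qform_smult[of _ d] qform_minus[of _ d] minus_carrier_mat)
    then show ?thesis using dom u \<open>0 \<le> c\<close> by simp
  qed
  ultimately show ?thesis
    using M by (simp add: psd_iff_qform)
qed

lemma density_rescaled_difference:
  assumes \<rho>: "density d \<rho>" and \<tau>: "density d \<tau>" and "0 \<le> \<epsilon>" "\<epsilon> < 1"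
    and dom: "\<forall>u\<in>carrier_vec d. \<epsilon> * qform \<tau> u \<le> qform \<rho> u"
  shows "density d (complex_of_real (1 / (1 - \<epsilon>)) \<cdot>\<^sub>m (\<rho> - complex_of_real \<epsilon> \<cdot>\<^sub>m \<tau>))"
proof -
  define c where "c = 1 / (1 - \<epsilon>)"
  have psd: "psd d \<rho>" "psd d \<tau>" and tr: "(\<Sum>i<d. \<rho> $$ (i, i)) = 1" "(\<Sum>i<d. \<tau> $$ (i, i)) = 1"
    using \<rho> \<tau> by (auto simp: density_def)
  have "(\<Sum>i<d. (complex_of_real c \<cdot>\<^sub>m (\<rho> - complex_of_real \<epsilon> \<cdot>\<^sub>m \<tau>)) $$ (i, i)) =
      complex_of_real c * ((\<Sum>i<d. \<rho> $$ (i, i)) - complex_of_real \<epsilon> * (\<Sum>i<d. \<tau> $$ (i, i)))"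
    using psdD(1)[OF psd(1)] psdD(1)[OF psd(2)]
    by (simp add: sum_subtractf sum_distrib_left right_diff_distrib)
  also have "\<dots> = complex_of_real (c * (1 - \<epsilon>))"
    by (simp add: tr)
  also have "c * (1 - \<epsilon>) = 1"
    using \<open>\<epsilon> < 1\<close> by (simp add: c_def)
  finally have "(\<Sum>i<d. (complex_of_real c \<cdot>\<^sub>m (\<rho> - complex_of_real \<epsilon> \<cdot>\<^sub>m \<tau>)) $$ (i, i)) = 1"
    by simp
  moreover have "0 \<le> c" using \<open>\<epsilon> < 1\<close> by (simp add: c_def)
  ultimately show ?thesis
    unfolding c_def[symmetric] density_def using psd_rescaled_difference[OF psd _ dom] by blast
qed

lemma density_of_vector:
  assumes \<psi>: "\<psi> \<in> carrier_vec d" "\<psi> \<noteq> 0\<^sub>v d"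
  obtains P where "density d P"
    "\<And>u. u \<in> carrier_vec d \<Longrightarrow> qform P u = (cmod (u \<bullet>c \<psi>))\<^sup>2 / Re (\<psi> \<bullet>c \<psi>)"
proof -
  define N where "N = Re (\<psi> \<bullet>c \<psi>)"
  have "0 < N"
    using cscalar_prod_self_le_0_iff[OF \<psi>(1)] \<psi>(2) by (simp add: N_def)
  have N: "\<psi> \<bullet>c \<psi> = of_real N"
    unfolding N_def by (rule cscalar_prod_self_real(1))
  define P where "P = mat d d (\<lambda>(i, j). \<psi> $ i * cnj (\<psi> $ j) / of_real N)"
  have P: "P \<in> carrier_mat d d" by (simp add: P_def)
  have Pu: "P *\<^sub>v u = ((u \<bullet>c \<psi>) / of_real N) \<cdot>\<^sub>v \<psi>" if u: "u \<in> carrier_vec d" for u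
    using \<psi>(1) u
    by (intro eq_vecI) (auto simp: P_def scalar_prod_def sum_distrib_left sum_divide_distrib ac_simps)
  have qform: "qform P u = (cmod (u \<bullet>c \<psi>))\<^sup>2 / N" if u: "u \<in> carrier_vec d" for u
  proof -
    have "(P *\<^sub>v u) \<bullet>c u = (u \<bullet>c \<psi>) * cnj (u \<bullet>c \<psi>) / of_real N"
      using \<psi>(1) u cscalar_prod_swap[OF u \<psi>(1)] by (simp add: Pu smult_scalar_prod_distrib[of _ d])
    then show ?thesis
      by (simp add: qform_def complex_norm_square[symmetric] flip: of_real_divide)
  qed
  have "P $$ (j, i) = cnj (P $$ (i, j))" if "i < d" "j < d" for i j
    using that by (simp add: P_def)
  then have "mat_adjoint P = P"
    using mat_adjoint_eq_iff[OF P] by blast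
  moreover have "(\<Sum>i<d. P $$ (i, i)) = 1"
  proof -
    have "(\<Sum>i<d. P $$ (i, i)) = (\<psi> \<bullet>c \<psi>) / of_real N"
      using \<psi>(1) by (simp add: P_def scalar_prod_def atLeast0LessThan sum_divide_distrib)
    then show ?thesis using N \<open>0 < N\<close> by simp
  qed
  ultimately have "density d P"
    using P qform \<open>0 < N\<close> by (simp add: density_def psd_iff_qform)
  with qform show ?thesis
    using that unfolding N_def by blast
qed

lemma density_image_nonzero:
  assumes "density d \<rho>"
  shows "\<exists>e\<in>carrier_vec d. \<rho> *\<^sub>v e \<noteq> 0\<^sub>v d"
proof -
  have \<rho>: "\<rho> \<in> carrier_mat d d" and tr: "(\<Sum>i<d. \<rho> $$ (i, i)) = 1"
    using assms by (auto simp: density_def psd_def)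
  then obtain k where k: "k < d" "\<rho> $$ (k, k) \<noteq> 0"
    by (metis (no_types, lifting) lessThan_iff sum.neutral zero_neq_one)
  then have "(\<rho> *\<^sub>v unit_vec d k) $ k \<noteq> 0" using \<rho> by simp
  then show ?thesis
    using k by (intro bexI[of _ "unit_vec d k"]) auto
qed

section \<open>Orthogonal projections and their products\<close>

definition orth_proj :: "nat \<Rightarrow> complex mat \<Rightarrow> bool" where
  "orth_proj d R \<longleftrightarrow> R \<in> carrier_mat d d \<and> R * R = R \<and> mat_adjoint R = R"

lemma is_orth_proj_onto_iff: "is_orth_proj_onto d R V \<longleftrightarrow> orth_proj d R \<and> mat_image R = V"
  unfolding is_orth_proj_onto_def orth_proj_def by auto

lemma orth_proj_idem_vec:
  assumes "orth_proj d R" "v \<in> carrier_vec d"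
  shows "R *\<^sub>v (R *\<^sub>v v) = R *\<^sub>v v"
  using assms assoc_mult_mat_vec[of R d d R d v] unfolding orth_proj_def by simp

lemma orth_proj_fixed_iff_image:
  assumes "orth_proj d R" "v \<in> carrier_vec d"
  shows "R *\<^sub>v v = v \<longleftrightarrow> v \<in> mat_image R"
proof
  assume "R *\<^sub>v v = v"
  then show "v \<in> mat_image R"
    using assms unfolding mat_image_def orth_proj_def by (metis (mono_tags, lifting) carrier_matD(2) mem_Collect_eq)
next
  assume "v \<in> mat_image R"
  then obtain w where "w \<in> carrier_vec d" "v = R *\<^sub>v w"
    using assms(1) unfolding mat_image_def orth_proj_def by auto
  then show "R *\<^sub>v v = v"
    using orth_proj_idem_vec[OF assms(1)] by simp
qed

lemma dominated_image_fixed: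
  assumes R: "orth_proj d R" and image: "mat_image R = mat_image S" and S: "psd d S"
    and \<rho>: "psd d \<rho>" and "0 < c" and dom: "\<forall>u\<in>carrier_vec d. c * qform \<rho> u \<le> qform S u"
    and e: "e \<in> carrier_vec d"
  shows "R *\<^sub>v (\<rho> *\<^sub>v e) = \<rho> *\<^sub>v e"
proof -
  \<comment> \<open>\<open>\<rho>\<close> vanishes on the kernel of \<open>R\<close>; being Hermitian, it therefore maps into the range of \<open>R\<close>.\<close>
  note RR = R[unfolded orth_proj_def] and \<rho>\<rho> = psdD[OF \<rho>]
  have kernel: "\<rho> *\<^sub>v y = 0\<^sub>v d" if y: "y \<in> carrier_vec d" and Ry: "R *\<^sub>v y = 0\<^sub>v d" for y
  proof -
    have Sy: "S *\<^sub>v y \<in> carrier_vec d" using psdD(1)[OF S] y by auto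
    have "S *\<^sub>v y \<in> mat_image R"
      using image y psdD(1)[OF S] unfolding mat_image_def by auto
    then have "(S *\<^sub>v y) \<bullet>c y = (R *\<^sub>v (S *\<^sub>v y)) \<bullet>c y"
      using orth_proj_fixed_iff_image[OF R Sy] by simp
    also have "\<dots> = 0"
      using hermitian_cscalar_prod[of R d "S *\<^sub>v y" y] RR Sy y Ry by simp
    finally have "qform S y = 0" by (simp add: qform_def)
    then have "c * qform \<rho> y \<le> 0"
      using dom y by auto
    with \<open>0 < c\<close> have "qform \<rho> y \<le> 0" by (simp add: mult_le_0_iff)
    then show ?thesis by (rule psd_qform_zero_imp_kernel[OF \<rho> y])
  qed
  define f where "f = \<rho> *\<^sub>v e"
  define z where "z = f - R *\<^sub>v f"
  have f: "f \<in> carrier_vec d" and Rf: "R *\<^sub>v f \<in> carrier_vec d" and z: "z \<in> carrier_vec d"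
    using \<rho>\<rho>(1) RR e by (auto simp: f_def z_def)
  have "R *\<^sub>v z = R *\<^sub>v f - R *\<^sub>v (R *\<^sub>v f)"
    using RR f Rf by (simp add: z_def mult_minus_distrib_mat_vec[of R d d])
  then have Rz: "R *\<^sub>v z = 0\<^sub>v d"
    using orth_proj_idem_vec[OF R f] Rf by simp
  have "z \<bullet>c z = f \<bullet>c z - (R *\<^sub>v f) \<bullet>c z"
    using f Rf z by (simp add: z_def minus_scalar_prod_distrib[of _ d])
  also have "(R *\<^sub>v f) \<bullet>c z = 0"
    using hermitian_cscalar_prod[of R d f z] RR f z Rz by simp
  also have "f \<bullet>c z = e \<bullet>c (\<rho> *\<^sub>v z)"
    using hermitian_cscalar_prod[OF \<rho>\<rho>(1,2) e z] by (simp add: f_def)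
  also have "\<rho> *\<^sub>v z = 0\<^sub>v d" by (rule kernel[OF z Rz])
  finally have "z = 0\<^sub>v d"
    using conjugate_square_eq_0_vec[OF z] e by simp
  then show ?thesis
    using minus_vec_eq_0_iff[OF f Rf] by (simp add: z_def f_def)
qed

lemma orth_proj_pythagoras:
  assumes R: "orth_proj d R" and u: "u \<in> carrier_vec d"
  shows "Re (u \<bullet>c u) = Re ((R *\<^sub>v u) \<bullet>c (R *\<^sub>v u)) + Re ((u - R *\<^sub>v u) \<bullet>c (u - R *\<^sub>v u))"
proof -
  have RR: "R \<in> carrier_mat d d" "mat_adjoint R = R" using R by (auto simp: orth_proj_def)
  have Ru: "R *\<^sub>v u \<in> carrier_vec d" using RR u by auto
  have 1: "(R *\<^sub>v u) \<bullet>c u = (R *\<^sub>v u) \<bullet>c (R *\<^sub>v u)"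
    using hermitian_cscalar_prod[OF RR Ru u] orth_proj_idem_vec[OF R u] by simp
  have 2: "u \<bullet>c (R *\<^sub>v u) = (R *\<^sub>v u) \<bullet>c (R *\<^sub>v u)"
    using 1 cscalar_prod_swap[OF Ru u] cscalar_prod_self_real(1)[of "R *\<^sub>v u"]
    by (metis complex_cnj_complex_of_real)
  have "(u - R *\<^sub>v u) \<bullet>c (u - R *\<^sub>v u)
      = u \<bullet>c u - u \<bullet>c (R *\<^sub>v u) - ((R *\<^sub>v u) \<bullet>c u - (R *\<^sub>v u) \<bullet>c (R *\<^sub>v u))"
    using u Ru by (simp add: minus_scalar_prod_distrib[of _ d] cscalar_prod_minus_right[of _ d])
  then show ?thesis using 1 2 by simp
qed

lemma orth_proj_norm_le:
  assumes "orth_proj d R" "u \<in> carrier_vec d"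
  shows "Re ((R *\<^sub>v u) \<bullet>c (R *\<^sub>v u)) \<le> Re (u \<bullet>c u)"
  using orth_proj_pythagoras[OF assms] cscalar_prod_self_real(2)[of "u - R *\<^sub>v u"] by linarith

lemma orth_proj_norm_eq_imp_fixed:
  assumes R: "orth_proj d R" and u: "u \<in> carrier_vec d"
    and "Re (u \<bullet>c u) \<le> Re ((R *\<^sub>v u) \<bullet>c (R *\<^sub>v u))"
  shows "R *\<^sub>v u = u"
proof -
  have Ru: "R *\<^sub>v u \<in> carrier_vec d"
    using R u by (auto simp: orth_proj_def intro: mult_mat_vec_carrier)
  have "Re ((u - R *\<^sub>v u) \<bullet>c (u - R *\<^sub>v u)) \<le> 0"
    using orth_proj_pythagoras[OF R u] assms(3) by linarith
  then show ?thesis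
    using cscalar_prod_self_le_0_iff[of "u - R *\<^sub>v u" d] minus_vec_eq_0_iff[OF u Ru] u Ru by simp
qed

lemma mprod_Nil [simp]: "mprod d [] = 1\<^sub>m d"
  by (simp add: mprod_def)

lemma mprod_Cons [simp]: "mprod d (M # Ms) = M * mprod d Ms"
  by (simp add: mprod_def)

lemma mprod_carrier: "(\<And>M. M \<in> set Ms \<Longrightarrow> M \<in> carrier_mat d d) \<Longrightarrow> mprod d Ms \<in> carrier_mat d d"
  by (induction Ms) (auto intro!: mult_carrier_mat)

lemma det_mprod:
  "(\<And>M. M \<in> set Ms \<Longrightarrow> M \<in> carrier_mat d d) \<Longrightarrow> det (mprod d Ms) = prod_list (map det Ms)"
proof (induction Ms)
  case (Cons M Ms)
  then show ?case using mprod_carrier[of Ms d] by (simp add: det_mult[of _ d])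
qed simp

lemma mprod_mult_vec_fixed:
  assumes "\<forall>R\<in>set Rs. R \<in> carrier_mat d d \<and> R *\<^sub>v v = v" "v \<in> carrier_vec d"
  shows "mprod d Rs *\<^sub>v v = v"
  using assms
proof (induction Rs)
  case (Cons R Rs)
  then have "mprod d Rs \<in> carrier_mat d d" by (auto intro: mprod_carrier)
  with Cons have "mprod d (R # Rs) *\<^sub>v v = R *\<^sub>v (mprod d Rs *\<^sub>v v)"
    using assoc_mult_mat_vec[of R d d "mprod d Rs" d v] by simp
  with Cons show ?case by simp
qed simp

lemma mprod_orth_proj_norm_eq_imp_fixed:
  assumes "\<forall>R\<in>set Rs. orth_proj d R" "v \<in> carrier_vec d"
    and "Re (v \<bullet>c v) \<le> Re ((mprod d Rs *\<^sub>v v) \<bullet>c (mprod d Rs *\<^sub>v v))"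
  shows "\<forall>R\<in>set Rs. R *\<^sub>v v = v"
  using assms
proof (induction Rs)
  case (Cons R Rs)
  have R: "orth_proj d R" and Rs: "\<forall>R\<in>set Rs. orth_proj d R" using Cons.prems(1) by auto
  have P: "mprod d Rs \<in> carrier_mat d d" using Rs by (intro mprod_carrier) (auto simp: orth_proj_def)
  define u where "u = mprod d Rs *\<^sub>v v"
  have u: "u \<in> carrier_vec d" using P Cons.prems(2) by (simp add: u_def)
  have "mprod d (R # Rs) *\<^sub>v v = R *\<^sub>v u"
    using R P Cons.prems(2) by (simp add: u_def orth_proj_def assoc_mult_mat_vec[of _ d d])
  then have vRu: "Re (v \<bullet>c v) \<le> Re ((R *\<^sub>v u) \<bullet>c (R *\<^sub>v u))" using Cons.prems(3) by simp
  also have "\<dots> \<le> Re (u \<bullet>c u)" by (rule orth_proj_norm_le[OF R u])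
  finally have fixed: "\<forall>R\<in>set Rs. R *\<^sub>v v = v"
    using Cons.IH[OF Rs Cons.prems(2)] unfolding u_def by blast
  then have "u = v"
    unfolding u_def using Rs Cons.prems(2) by (intro mprod_mult_vec_fixed) (auto simp: orth_proj_def)
  then have "R *\<^sub>v v = v"
    using orth_proj_norm_eq_imp_fixed[OF R Cons.prems(2)] vRu by simp
  with fixed show ?case by simp
qed simp

lemma mprod_orth_proj_fixed_iff:
  assumes "\<forall>R\<in>set Rs. orth_proj d R" "v \<in> carrier_vec d"
  shows "mprod d Rs *\<^sub>v v = v \<longleftrightarrow> (\<forall>R\<in>set Rs. R *\<^sub>v v = v)"
proof
  assume "mprod d Rs *\<^sub>v v = v"
  then show "\<forall>R\<in>set Rs. R *\<^sub>v v = v"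
    by (intro mprod_orth_proj_norm_eq_imp_fixed[OF assms]) simp
next
  assume "\<forall>R\<in>set Rs. R *\<^sub>v v = v"
  with assms(1) have "\<forall>R\<in>set Rs. R \<in> carrier_mat d d \<and> R *\<^sub>v v = v"
    unfolding orth_proj_def by blast
  then show "mprod d Rs *\<^sub>v v = v"
    by (rule mprod_mult_vec_fixed[OF _ assms(2)])
qed

lemma det_mprod_minus_one_eq_0_iff:
  assumes "\<forall>R\<in>set Rs. orth_proj d R"
  shows "det (mprod d Rs - 1\<^sub>m d) = 0 \<longleftrightarrow> (\<exists>v\<in>carrier_vec d. v \<noteq> 0\<^sub>v d \<and> (\<forall>R\<in>set Rs. R *\<^sub>v v = v))"
proof -
  have P: "mprod d Rs \<in> carrier_mat d d"
    using assms by (intro mprod_carrier) (auto simp: orth_proj_def)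
  have "(mprod d Rs - 1\<^sub>m d) *\<^sub>v v = 0\<^sub>v d \<longleftrightarrow> (\<forall>R\<in>set Rs. R *\<^sub>v v = v)"
    if v: "v \<in> carrier_vec d" for v
  proof -
    have "(mprod d Rs - 1\<^sub>m d) *\<^sub>v v = mprod d Rs *\<^sub>v v - v"
      using P v by (simp add: minus_mult_distrib_mat_vec)
    also have "\<dots> = 0\<^sub>v d \<longleftrightarrow> mprod d Rs *\<^sub>v v = v"
      using P v by (simp add: minus_vec_eq_0_iff[of _ d])
    finally show ?thesis using mprod_orth_proj_fixed_iff[OF assms v] by simp
  qed
  moreover have "mprod d Rs - 1\<^sub>m d \<in> carrier_mat d d"
    using P by (simp add: minus_carrier_mat)
  ultimately show ?thesis
    using det_0_iff_vec_prod_zero by blast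
qed

lemma det_mprod_projection_factors_eq_0_iff:
  assumes "\<forall>Rs\<in>set Rss. \<forall>R\<in>set Rs. orth_proj d R"
  shows "det (mprod d (map (\<lambda>Rs. mprod d Rs - 1\<^sub>m d) Rss)) = 0 \<longleftrightarrow>
    (\<exists>Rs\<in>set Rss. \<exists>v\<in>carrier_vec d. v \<noteq> 0\<^sub>v d \<and> (\<forall>R\<in>set Rs. R *\<^sub>v v = v))"
proof -
  have "mprod d Rs \<in> carrier_mat d d" if "Rs \<in> set Rss" for Rs
    using assms that by (intro mprod_carrier) (auto simp: orth_proj_def)
  then have "det (mprod d (map (\<lambda>Rs. mprod d Rs - 1\<^sub>m d) Rss)) =
      prod_list (map (\<lambda>Rs. det (mprod d Rs - 1\<^sub>m d)) Rss)"
    by (subst det_mprod[of _ d]) (auto simp: comp_def)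
  then have "det (mprod d (map (\<lambda>Rs. mprod d Rs - 1\<^sub>m d) Rss)) = 0 \<longleftrightarrow>
      (\<exists>Rs\<in>set Rss. det (mprod d Rs - 1\<^sub>m d) = 0)"
    by auto
  then show ?thesis
    using assms by (auto simp: det_mprod_minus_one_eq_0_iff)
qed

section \<open>Assemblages built from a local deterministic box\<close>

lemma finite_tuples: "finite (tuples n B)"
proof -
  have "tuples n B \<subseteq> {xs. set xs \<subseteq> {..<(\<Sum>i<n. B i)} \<and> length xs = n}"
  proof
    fix a assume a: "a \<in> tuples n B"
    have "y \<in> {..<(\<Sum>i<n. B i)}" if y: "y \<in> set a" for y
    proof -
      from y obtain i where "i < length a" "a ! i = y" by (auto simp: in_set_conv_nth)
      with a have "i < n" "y < B i" by (auto simp: tuples_def)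
      moreover have "B i \<le> (\<Sum>i<n. B i)" using \<open>i < n\<close> by (intro member_le_sum) auto
      ultimately show ?thesis by simp
    qed
    with a show "a \<in> {xs. set xs \<subseteq> {..<(\<Sum>i<n. B i)} \<and> length xs = n}"
      by (auto simp: tuples_def)
  qed
  then show ?thesis
    using finite_lists_length_eq[of "{..<(\<Sum>i<n. B i)}" n] finite_subset by blast
qed

lemma replicate_0_in_tuples: "\<forall>i<n. 1 \<le> B i \<Longrightarrow> replicate n 0 \<in> tuples n B"
  by (auto simp: tuples_def)

lemma finite_I_L: "finite (I_L n A X L)"
  by (rule finite_subset[of _ "tuples n A \<times> tuples n X"]) (auto simp: I_L_def finite_tuples)

definition box_outcome :: "nat \<Rightarrow> nat list list \<Rightarrow> nat list \<Rightarrow> nat list" where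
  "box_outcome n L x = map (\<lambda>i. L ! i ! (x ! i)) [0..<n]"

lemma box_outcome_in_tuples:
  "L \<in> local_boxes n A X \<Longrightarrow> x \<in> tuples n X \<Longrightarrow> box_outcome n L x \<in> tuples n A"
  by (simp add: local_boxes_def tuples_def box_outcome_def)

lemma I_L_iff_box_outcome:
  assumes "L \<in> local_boxes n A X"
  shows "(a, x) \<in> I_L n A X L \<longleftrightarrow> x \<in> tuples n X \<and> a = box_outcome n L x"
proof -
  have "a = box_outcome n L x \<longleftrightarrow> length a = n \<and> (\<forall>i<n. a ! i = L ! i ! (x ! i))"
    unfolding box_outcome_def by (auto intro: nth_equalityI)
  moreover have "a \<in> tuples n A" if "x \<in> tuples n X" "a = box_outcome n L x"
    using box_outcome_in_tuples[OF assms] that by simp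
  ultimately show ?thesis
    unfolding I_L_def by (auto simp: tuples_def)
qed

definition box_assemblage ::
  "nat \<Rightarrow> (nat \<Rightarrow> nat) \<Rightarrow> (nat \<Rightarrow> nat) \<Rightarrow> nat \<Rightarrow> nat list list \<Rightarrow> complex mat \<Rightarrow>
    nat list \<Rightarrow> nat list \<Rightarrow> complex mat" where
  "box_assemblage n A X d L \<rho> a x = (if (a, x) \<in> I_L n A X L then \<rho> else 0\<^sub>m d d)"

lemma has_LHS_box_assemblage:
  assumes L: "L \<in> local_boxes n A X" and \<rho>: "density d \<rho>"
  shows "has_LHS n A X d (box_assemblage n A X d L \<rho>)"
proof -
  define p :: "nat \<Rightarrow> nat \<Rightarrow> nat \<Rightarrow> nat \<Rightarrow> real" where
    "p j i a x = (if a = L ! i ! x then 1 else 0)" for j i a x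
  have p: "(\<forall>a<A i. 0 \<le> p 0 i a x) \<and> (\<Sum>a<A i. p 0 i a x) = 1" if "i < n" "x < X i" for i x
    using L that by (simp add: p_def local_boxes_def)
  have "box_assemblage n A X d L \<rho> a x =
      msum d {..<1} (\<lambda>j. complex_of_real (1 * (\<Prod>i<n. p j i (a ! i) (x ! i))) \<cdot>\<^sub>m \<rho>)"
    if "a \<in> tuples n A" "x \<in> tuples n X" for a x
  proof -
    have "complex_of_real (1 * (\<Prod>i<n. p 0 i (a ! i) (x ! i))) =
        (if (a, x) \<in> I_L n A X L then 1 else 0)"
      using that by (auto simp: p_def I_L_def simp del: of_real_prod)
    moreover have "\<rho> \<in> carrier_mat d d" using \<rho> by (simp add: density_def psd_def)
    ultimately have "box_assemblage n A X d L \<rho> a x =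
        complex_of_real (1 * (\<Prod>i<n. p 0 i (a ! i) (x ! i))) \<cdot>\<^sub>m \<rho>"
      by (intro eq_matI) (auto simp: box_assemblage_def simp del: of_real_prod)
    then show ?thesis
      using \<open>\<rho> \<in> carrier_mat d d\<close> by (simp add: lessThan_Suc msum_singleton del: of_real_prod)
  qed
  then show ?thesis
    unfolding has_LHS_def using \<rho> p
    by (intro exI[of _ 1] exI[of _ "\<lambda>_. 1"] exI[of _ p] exI[of _ "\<lambda>_. \<rho>"]) auto
qed

lemma no_signaling_box_assemblage:
  assumes L: "L \<in> local_boxes n A X" and \<rho>: "density d \<rho>"
  shows "no_signaling n A X d (box_assemblage n A X d L \<rho>)"
proof -
  let ?\<sigma> = "box_assemblage n A X d L \<rho>"
  have \<rho>\<rho>: "psd d \<rho>" "\<rho> \<in> carrier_mat d d" using \<rho> by (auto simp: density_def psd_def)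
  have msum_box: "msum d S (\<lambda>a. ?\<sigma> a x) = (if box_outcome n L x \<in> S then \<rho> else 0\<^sub>m d d)"
    if x: "x \<in> tuples n X" and S: "S \<subseteq> tuples n A" for S x
  proof -
    have "msum d S (\<lambda>a. ?\<sigma> a x) = msum d S (\<lambda>a. if a = box_outcome n L x then \<rho> else 0\<^sub>m d d)"
      using x by (intro msum_cong) (simp add: box_assemblage_def I_L_iff_box_outcome[OF L])
    then show ?thesis
      using msum_delta[OF finite_subset[OF S finite_tuples] \<rho>\<rho>(2)] by simp
  qed
  have agree: "box_outcome n L x \<in> {a' \<in> tuples n A. agree_on I a' a} \<longleftrightarrow>
      (\<forall>i\<in>I. L ! i ! (x ! i) = a ! i)" if "I \<subseteq> {..<n}" "x \<in> tuples n X" for I a x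
    using box_outcome_in_tuples[OF L that(2)] that(1)
    by (auto simp: agree_on_def box_outcome_def subset_iff)
  have "psd d (?\<sigma> a x)" for a x
    by (simp add: box_assemblage_def \<rho>\<rho>(1) psd_zero)
  moreover have "msum d (tuples n A) (\<lambda>a. ?\<sigma> a x) = \<rho>" if "x \<in> tuples n X" for x
    using msum_box[OF that] box_outcome_in_tuples[OF L that] by simp
  moreover have "msum d {a' \<in> tuples n A. agree_on I a' a} (\<lambda>a'. ?\<sigma> a' x) =
      msum d {a' \<in> tuples n A. agree_on I a' a} (\<lambda>a'. ?\<sigma> a' x')"
    if "I \<subseteq> {..<n}" "x \<in> tuples n X" "x' \<in> tuples n X" "agree_on I x x'" for I a x x'
    using that msum_box[OF that(2)] msum_box[OF that(3)] agree[OF that(1,2)] agree[OF that(1,3)]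
    by (simp add: agree_on_def)
  ultimately show ?thesis
    unfolding no_signaling_def using \<rho> by blast
qed

lemma no_signaling_rescaled_difference:
  assumes \<sigma>: "no_signaling n A X d \<sigma>" and \<tau>: "no_signaling n A X d \<tau>"
    and x0: "x0 \<in> tuples n X" and "0 \<le> \<epsilon>" "\<epsilon> < 1"
    and dom: "\<forall>a\<in>tuples n A. \<forall>x\<in>tuples n X. \<forall>u\<in>carrier_vec d. \<epsilon> * qform (\<tau> a x) u \<le> qform (\<sigma> a x) u"
  shows "no_signaling n A X d
    (\<lambda>a x. complex_of_real (1 / (1 - \<epsilon>)) \<cdot>\<^sub>m (\<sigma> a x - complex_of_real \<epsilon> \<cdot>\<^sub>m \<tau> a x))"
    (is "no_signaling n A X d ?\<sigma>'")
proof -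
  define c where "c = 1 / (1 - \<epsilon>)"
  have "0 \<le> c" using \<open>\<epsilon> < 1\<close> by (simp add: c_def)
  have psd_\<sigma>: "psd d (\<sigma> a x)" and psd_\<tau>: "psd d (\<tau> a x)"
    if "a \<in> tuples n A" "x \<in> tuples n X" for a x
    using \<sigma> \<tau> that by (auto simp: no_signaling_def)
  obtain \<rho>\<sigma> \<rho>\<tau> where \<rho>\<sigma>: "density d \<rho>\<sigma>" "\<forall>x\<in>tuples n X. msum d (tuples n A) (\<lambda>a. \<sigma> a x) = \<rho>\<sigma>"
    and \<rho>\<tau>: "density d \<rho>\<tau>" "\<forall>x\<in>tuples n X. msum d (tuples n A) (\<lambda>a. \<tau> a x) = \<rho>\<tau>"
    using \<sigma> \<tau> unfolding no_signaling_def by metis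
  have msum_\<sigma>': "msum d S (\<lambda>a. ?\<sigma>' a x) =
      complex_of_real c \<cdot>\<^sub>m (msum d S (\<lambda>a. \<sigma> a x) - complex_of_real \<epsilon> \<cdot>\<^sub>m msum d S (\<lambda>a. \<tau> a x))"
    if "S \<subseteq> tuples n A" "x \<in> tuples n X" for S x
    using that psd_\<sigma> psd_\<tau> psdD(1) unfolding c_def by (intro msum_rescaled_difference) blast
  have "psd d (?\<sigma>' a x)" if "a \<in> tuples n A" "x \<in> tuples n X" for a x
    using psd_rescaled_difference[OF psd_\<sigma>[OF that] psd_\<tau>[OF that] \<open>0 \<le> c\<close>, of \<epsilon>] dom that
    unfolding c_def by blast
  moreover have "density d (complex_of_real c \<cdot>\<^sub>m (\<rho>\<sigma> - complex_of_real \<epsilon> \<cdot>\<^sub>m \<rho>\<tau>))"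
  proof -
    have "\<epsilon> * qform \<rho>\<tau> u \<le> qform \<rho>\<sigma> u" if u: "u \<in> carrier_vec d" for u
      using qform_msum_mono[of "tuples n A" "\<lambda>a. \<sigma> a x0" d "\<lambda>a. \<tau> a x0" u \<epsilon>]
        psd_\<sigma> psd_\<tau> psdD(1) x0 u dom \<rho>\<sigma>(2) \<rho>\<tau>(2) by simp
    then show ?thesis
      using density_rescaled_difference[OF \<rho>\<sigma>(1) \<rho>\<tau>(1) \<open>0 \<le> \<epsilon>\<close> \<open>\<epsilon> < 1\<close>] unfolding c_def by blast
  qed
  moreover have "msum d (tuples n A) (\<lambda>a. ?\<sigma>' a x) = complex_of_real c \<cdot>\<^sub>m (\<rho>\<sigma> - complex_of_real \<epsilon> \<cdot>\<^sub>m \<rho>\<tau>)"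
    if "x \<in> tuples n X" for x
  proof -
    have "msum d (tuples n A) (\<lambda>a. ?\<sigma>' a x) = complex_of_real c \<cdot>\<^sub>m
        (msum d (tuples n A) (\<lambda>a. \<sigma> a x) - complex_of_real \<epsilon> \<cdot>\<^sub>m msum d (tuples n A) (\<lambda>a. \<tau> a x))"
      by (rule msum_\<sigma>'[OF subset_refl that])
    then show ?thesis using \<rho>\<sigma>(2) \<rho>\<tau>(2) that by simp
  qed
  moreover have "msum d {a' \<in> tuples n A. agree_on I a' a} (\<lambda>a'. ?\<sigma>' a' x) =
      msum d {a' \<in> tuples n A. agree_on I a' a} (\<lambda>a'. ?\<sigma>' a' x')"
    if "I \<subseteq> {..<n}" "1 \<le> card I" "card I < n" "a \<in> tuples n A" "x \<in> tuples n X" "x' \<in> tuples n X"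
      "agree_on I x x'" for I a x x'
  proof -
    have "msum d {a' \<in> tuples n A. agree_on I a' a} (\<lambda>a'. \<sigma> a' x) =
        msum d {a' \<in> tuples n A. agree_on I a' a} (\<lambda>a'. \<sigma> a' x')"
      "msum d {a' \<in> tuples n A. agree_on I a' a} (\<lambda>a'. \<tau> a' x) =
        msum d {a' \<in> tuples n A. agree_on I a' a} (\<lambda>a'. \<tau> a' x')"
      using \<sigma>[unfolded no_signaling_def, THEN conjunct2, THEN conjunct2, rule_format]
        \<tau>[unfolded no_signaling_def, THEN conjunct2, THEN conjunct2, rule_format] that by blast+
    moreover have "{a' \<in> tuples n A. agree_on I a' a} \<subseteq> tuples n A" by blast
    ultimately show ?thesis
      using msum_\<sigma>'[of _ x] msum_\<sigma>'[of _ x'] that(5,6) by simp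
  qed
  ultimately show ?thesis
    unfolding no_signaling_def c_def by blast
qed

lemma mat_convex_split:
  fixes A B :: "complex mat"
  assumes "A \<in> carrier_mat d d" "B \<in> carrier_mat d d" "\<epsilon> < 1"
  shows "A = complex_of_real \<epsilon> \<cdot>\<^sub>m B + complex_of_real (1 - \<epsilon>) \<cdot>\<^sub>m
    (complex_of_real (1 / (1 - \<epsilon>)) \<cdot>\<^sub>m (A - complex_of_real \<epsilon> \<cdot>\<^sub>m B))"
proof -
  have "complex_of_real \<epsilon> \<noteq> 1" using assms(3) by simp
  then show ?thesis
    using assms by (intro eq_matI) (auto simp: field_simps)
qed

lemma not_on_edge_if_dominates:
  assumes \<sigma>: "no_signaling n A X d \<sigma>" and \<tau>: "has_LHS n A X d \<tau>" "no_signaling n A X d \<tau>"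
    and x0: "x0 \<in> tuples n X" and "0 < \<epsilon>" "\<epsilon> < 1"
    and dom: "\<forall>a\<in>tuples n A. \<forall>x\<in>tuples n X. \<forall>u\<in>carrier_vec d. \<epsilon> * qform (\<tau> a x) u \<le> qform (\<sigma> a x) u"
  shows "\<not> on_edge n A X d \<sigma>"
proof
  assume edge: "on_edge n A X d \<sigma>"
  define \<sigma>' where "\<sigma>' a x = complex_of_real (1 / (1 - \<epsilon>)) \<cdot>\<^sub>m (\<sigma> a x - complex_of_real \<epsilon> \<cdot>\<^sub>m \<tau> a x)"
    for a x
  have "no_signaling n A X d \<sigma>'"
    unfolding \<sigma>'_def using assms by (intro no_signaling_rescaled_difference) auto
  moreover have "\<sigma> a x = complex_of_real \<epsilon> \<cdot>\<^sub>m \<tau> a x + complex_of_real (1 - \<epsilon>) \<cdot>\<^sub>m \<sigma>' a x"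
    if "a \<in> tuples n A" "x \<in> tuples n X" for a x
  proof -
    have "\<sigma> a x \<in> carrier_mat d d" "\<tau> a x \<in> carrier_mat d d"
      using \<sigma> \<tau>(2) that by (auto simp: no_signaling_def psd_def)
    then show ?thesis
      using mat_convex_split \<open>\<epsilon> < 1\<close> unfolding \<sigma>'_def by blast
  qed
  ultimately have "\<epsilon> = 0"
    using edge \<tau>(1) \<open>0 < \<epsilon>\<close> \<open>\<epsilon> < 1\<close> unfolding on_edge_def by (meson less_eq_real_def)
  with \<open>0 < \<epsilon>\<close> show False by simp
qed

section \<open>The edge criterion\<close>

lemma uniform_domination_constant:
  fixes f :: "'u \<Rightarrow> real" and g :: "'i \<Rightarrow> 'u \<Rightarrow> real"
  assumes "finite I" and bound: "\<forall>i\<in>I. \<exists>K. \<forall>u\<in>U. f u \<le> K * g i u"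
    and g: "\<forall>i\<in>I. \<forall>u\<in>U. 0 \<le> g i u"
  shows "\<exists>\<epsilon>>0. \<epsilon> < 1 \<and> (\<forall>i\<in>I. \<forall>u\<in>U. \<epsilon> * f u \<le> g i u)"
proof -
  obtain K where K: "\<forall>i\<in>I. \<forall>u\<in>U. f u \<le> K i * g i u"
    using bound by metis
  define C where "C = 2 + (\<Sum>i\<in>I. \<bar>K i\<bar>)"
  have C: "2 \<le> C" by (simp add: C_def sum_nonneg)
  have "1 / C * f u \<le> g i u" if "i \<in> I" "u \<in> U" for i u
  proof -
    have "\<bar>K i\<bar> \<le> C"
      using \<open>finite I\<close> that(1) member_le_sum[of i I "\<lambda>i. \<bar>K i\<bar>"] by (simp add: C_def)
    then have "\<bar>K i\<bar> * g i u \<le> C * g i u"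
      using g that by (simp add: mult_right_mono)
    moreover have "f u \<le> \<bar>K i\<bar> * g i u"
      using K g that by (meson abs_ge_self mult_right_mono order_trans)
    ultimately show ?thesis
      using C by (simp add: field_simps)
  qed
  moreover have "0 < 1 / C" "1 / C < 1" using C by simp_all
  ultimately show ?thesis by blast
qed

lemma common_fixed_vector_imp_not_on_edge:
  assumes X: "\<forall>i<n. 1 \<le> X i" and \<sigma>: "no_signaling n A X d \<sigma>"
    and R: "\<forall>a\<in>tuples n A. \<forall>x\<in>tuples n X. is_orth_proj_onto d (R a x) (mat_image (\<sigma> a x))"
    and L: "L \<in> local_boxes n A X"
    and \<psi>: "\<psi> \<in> carrier_vec d" "\<psi> \<noteq> 0\<^sub>v d" and fixed: "\<forall>(a, x)\<in>I_L n A X L. R a x *\<^sub>v \<psi> = \<psi>"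
  shows "\<not> on_edge n A X d \<sigma>"
proof -
  have psd_\<sigma>: "psd d (\<sigma> a x)" if "a \<in> tuples n A" "x \<in> tuples n X" for a x
    using \<sigma> that by (auto simp: no_signaling_def)
  have qform_\<sigma>: "0 \<le> qform (\<sigma> a x) u"
    if "a \<in> tuples n A" "x \<in> tuples n X" "u \<in> carrier_vec d" for a x u
    using psdD(3)[OF psd_\<sigma>[OF that(1,2)] that(3)] .
  obtain P where P: "density d P"
    and qform_P: "\<And>u. u \<in> carrier_vec d \<Longrightarrow> qform P u = (cmod (u \<bullet>c \<psi>))\<^sup>2 / Re (\<psi> \<bullet>c \<psi>)"
    using density_of_vector[OF \<psi>] by blast
  have "0 < Re (\<psi> \<bullet>c \<psi>)"
    using cscalar_prod_self_le_0_iff[OF \<psi>(1)] \<psi>(2) by simp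
  have bound: "\<forall>ax\<in>I_L n A X L. \<exists>K. \<forall>u\<in>carrier_vec d. qform P u \<le> K * qform (\<sigma> (fst ax) (snd ax)) u"
  proof
    fix ax assume "ax \<in> I_L n A X L"
    moreover obtain a x where a_x: "ax = (a, x)" by force
    ultimately have ax: "(a, x) \<in> I_L n A X L" by simp
    have t: "a \<in> tuples n A" "x \<in> tuples n X" using ax by (auto simp: I_L_def)
    then have "\<psi> \<in> mat_image (\<sigma> a x)"
      using R orth_proj_fixed_iff_image[OF _ \<psi>(1)] fixed ax by (fastforce simp: is_orth_proj_onto_iff)
    then obtain \<beta> where "\<forall>u\<in>carrier_vec d. (cmod (u \<bullet>c \<psi>))\<^sup>2 \<le> \<beta> * qform (\<sigma> a x) u"
      using psd_image_bound[OF psd_\<sigma>[OF t]] by blast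
    then have "\<forall>u\<in>carrier_vec d. qform P u \<le> \<beta> / Re (\<psi> \<bullet>c \<psi>) * qform (\<sigma> a x) u"
      using qform_P \<open>0 < Re (\<psi> \<bullet>c \<psi>)\<close> by (simp add: divide_right_mono)
    then show "\<exists>K. \<forall>u\<in>carrier_vec d. qform P u \<le> K * qform (\<sigma> (fst ax) (snd ax)) u"
      unfolding a_x fst_conv snd_conv by blast
  qed
  have nonneg: "\<forall>ax\<in>I_L n A X L. \<forall>u\<in>carrier_vec d. 0 \<le> qform (\<sigma> (fst ax) (snd ax)) u"
    using qform_\<sigma> by (auto simp: I_L_def)
  obtain \<epsilon> where \<epsilon>: "0 < \<epsilon>" "\<epsilon> < 1"
    and dom_I_L: "\<forall>ax\<in>I_L n A X L. \<forall>u\<in>carrier_vec d. \<epsilon> * qform P u \<le> qform (\<sigma> (fst ax) (snd ax)) u"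
    using uniform_domination_constant[OF finite_I_L bound nonneg] by blast
  have "\<epsilon> * qform (box_assemblage n A X d L P a x) u \<le> qform (\<sigma> a x) u"
    if "a \<in> tuples n A" "x \<in> tuples n X" "u \<in> carrier_vec d" for a x u
    using dom_I_L that qform_\<sigma> by (fastforce simp: box_assemblage_def qform_zero)
  then show ?thesis
    using not_on_edge_if_dominates[OF \<sigma> has_LHS_box_assemblage[OF L P] no_signaling_box_assemblage[OF L P]
        replicate_0_in_tuples[OF X] \<epsilon>] by blast
qed

lemma exists_pos_of_sum_eq_1:
  fixes f :: "'a \<Rightarrow> real"
  assumes "\<forall>k\<in>S. 0 \<le> f k" "sum f S = 1"
  shows "\<exists>k\<in>S. 0 < f k"
  using assms by (metis less_eq_real_def sum.neutral zero_neq_one)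

lemma has_LHS_dominates_box:
  assumes "has_LHS n A X d \<sigma>"
  shows "\<exists>L\<in>local_boxes n A X. \<exists>\<rho>. density d \<rho> \<and>
    (\<forall>(a, x)\<in>I_L n A X L. \<exists>c>0. \<forall>u\<in>carrier_vec d. c * qform \<rho> u \<le> qform (\<sigma> a x) u)"
proof -
  obtain m and q :: "nat \<Rightarrow> real" and p :: "nat \<Rightarrow> nat \<Rightarrow> nat \<Rightarrow> nat \<Rightarrow> real" and \<rho> where
    q: "\<forall>j<m. 0 \<le> q j" "(\<Sum>j<m. q j) = 1" and \<rho>: "\<forall>j<m. density d (\<rho> j)"
    and p: "\<forall>j<m. \<forall>i<n. \<forall>x<X i. (\<forall>a<A i. 0 \<le> p j i a x) \<and> (\<Sum>a<A i. p j i a x) = 1"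
    and \<sigma>: "\<forall>a\<in>tuples n A. \<forall>x\<in>tuples n X.
      \<sigma> a x = msum d {..<m} (\<lambda>j. complex_of_real (q j * (\<Prod>i<n. p j i (a ! i) (x ! i))) \<cdot>\<^sub>m \<rho> j)"
    using assms unfolding has_LHS_def by blast
  obtain j where j: "j < m" "0 < q j"
    using exists_pos_of_sum_eq_1[of "{..<m}" q] q by auto
  have "\<forall>i x. \<exists>a. i < n \<and> x < X i \<longrightarrow> a < A i \<and> 0 < p j i a x"
    using exists_pos_of_sum_eq_1[of "{..<A _}"] p j(1) by (metis lessThan_iff)
  then obtain f where f: "\<And>i x. i < n \<Longrightarrow> x < X i \<Longrightarrow> f i x < A i \<and> 0 < p j i (f i x) x"
    by metis
  \<comment> \<open>The box picks outcomes to which the hidden state \<open>j\<close> gives positive probability.\<close>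
  define L where "L = map (\<lambda>i. map (f i) [0..<X i]) [0..<n]"
  have L: "L \<in> local_boxes n A X"
    using f by (auto simp: L_def local_boxes_def)
  have "\<exists>c>0. \<forall>u\<in>carrier_vec d. c * qform (\<rho> j) u \<le> qform (\<sigma> a x) u"
    if ax: "(a, x) \<in> I_L n A X L" for a x
  proof -
    have t: "a \<in> tuples n A" "x \<in> tuples n X" using ax by (auto simp: I_L_def)
    define w where "w k = q k * (\<Prod>i<n. p k i (a ! i) (x ! i))" for k
    have "a ! i = f i (x ! i)" "x ! i < X i" if "i < n" for i
      using ax that by (auto simp: I_L_def L_def tuples_def)
    then have "0 < w j"
      using f j by (auto simp: w_def intro!: mult_pos_pos prod_pos)
    moreover have "w j * qform (\<rho> j) u \<le> qform (\<sigma> a x) u" if "u \<in> carrier_vec d" for u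
    proof -
      have "\<forall>k\<in>{..<m}. 0 \<le> w k \<and> psd d (\<rho> k)"
        using q(1) p t \<rho> by (auto simp: w_def tuples_def density_def intro!: mult_nonneg_nonneg prod_nonneg)
      moreover have "msum d {..<m} (\<lambda>k. complex_of_real (w k) \<cdot>\<^sub>m \<rho> k) = \<sigma> a x"
        unfolding w_def using \<sigma> t by simp
      ultimately show ?thesis
        using qform_msum_ge_term[of "{..<m}" j w d \<rho> u] j(1) that by simp
    qed
    ultimately show ?thesis by blast
  qed
  then show ?thesis
    using L \<rho> j(1) by blast
qed

lemma not_on_edge_imp_common_fixed_vector:
  assumes \<sigma>: "no_signaling n A X d \<sigma>"
    and R: "\<forall>a\<in>tuples n A. \<forall>x\<in>tuples n X. is_orth_proj_onto d (R a x) (mat_image (\<sigma> a x))"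
    and "\<not> on_edge n A X d \<sigma>"
  shows "\<exists>L\<in>local_boxes n A X. \<exists>\<psi>\<in>carrier_vec d. \<psi> \<noteq> 0\<^sub>v d \<and> (\<forall>(a, x)\<in>I_L n A X L. R a x *\<^sub>v \<psi> = \<psi>)"
proof -
  obtain \<epsilon> \<sigma>1 \<sigma>2 where \<epsilon>: "0 < \<epsilon>" "\<epsilon> \<le> 1" and \<sigma>1: "has_LHS n A X d \<sigma>1"
    and \<sigma>2: "no_signaling n A X d \<sigma>2"
    and split: "\<forall>a\<in>tuples n A. \<forall>x\<in>tuples n X.
      \<sigma> a x = complex_of_real \<epsilon> \<cdot>\<^sub>m \<sigma>1 a x + complex_of_real (1 - \<epsilon>) \<cdot>\<^sub>m \<sigma>2 a x"
    using assms(3) unfolding on_edge_def by force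
  obtain L \<rho> where L: "L \<in> local_boxes n A X" and \<rho>: "density d \<rho>"
    and dom: "\<forall>(a, x)\<in>I_L n A X L. \<exists>c>0. \<forall>u\<in>carrier_vec d. c * qform \<rho> u \<le> qform (\<sigma>1 a x) u"
    using has_LHS_dominates_box[OF \<sigma>1] by blast
  obtain e where e: "e \<in> carrier_vec d" "\<rho> *\<^sub>v e \<noteq> 0\<^sub>v d"
    using density_image_nonzero[OF \<rho>] by blast
  have fixed: "R a x *\<^sub>v (\<rho> *\<^sub>v e) = \<rho> *\<^sub>v e" if ax: "(a, x) \<in> I_L n A X L" for a x
  proof -
    have t: "a \<in> tuples n A" "x \<in> tuples n X" using ax by (auto simp: I_L_def)
    obtain c where "0 < c" and c: "\<forall>u\<in>carrier_vec d. c * qform \<rho> u \<le> qform (\<sigma>1 a x) u"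
      using dom ax by blast
    have psd: "psd d (\<sigma> a x)" "psd d (\<sigma>2 a x)" using \<sigma> \<sigma>2 t by (auto simp: no_signaling_def)
    have \<sigma>1_car: "\<sigma>1 a x \<in> carrier_mat d d"
      using \<sigma>1 t by (auto simp: has_LHS_def)
    have "\<epsilon> * c * qform \<rho> u \<le> qform (\<sigma> a x) u" if u: "u \<in> carrier_vec d" for u
    proof -
      have "qform (\<sigma> a x) u = \<epsilon> * qform (\<sigma>1 a x) u + (1 - \<epsilon>) * qform (\<sigma>2 a x) u"
        using split t u \<sigma>1_car psdD(1)[OF psd(2)]
        by (simp add: qform_add[of _ d] qform_smult[of _ d] del: of_real_diff)
      moreover have "0 \<le> (1 - \<epsilon>) * qform (\<sigma>2 a x) u"
        using psdD(3)[OF psd(2) u] \<epsilon>(2) by simp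
      ultimately show ?thesis
        using c u \<epsilon>(1) by (auto simp: mult.assoc intro: order_trans[OF mult_left_mono])
    qed
    moreover have "orth_proj d (R a x)" "mat_image (R a x) = mat_image (\<sigma> a x)"
      using R t by (auto simp: is_orth_proj_onto_iff)
    moreover have "psd d \<rho>" "0 < \<epsilon> * c"
      using \<rho> \<epsilon>(1) \<open>0 < c\<close> by (simp_all add: density_def)
    ultimately show ?thesis
      using dominated_image_fixed[OF _ _ psd(1)] e(1) by blast
  qed
  moreover have "\<rho> *\<^sub>v e \<in> carrier_vec d"
    using \<rho> e(1) by (auto simp: density_def psd_def)
  ultimately show ?thesis
    using L e(2) by blast
qed

lemma det_local_box_products_eq_0_iff:
  assumes R: "\<forall>a\<in>tuples n A. \<forall>x\<in>tuples n X. orth_proj d (R a x)"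
    and Ls: "set Ls = local_boxes n A X"
    and ord: "\<forall>L\<in>local_boxes n A X. set (ord L) = I_L n A X L"
  shows "det (mprod d (map (\<lambda>L. mprod d (map (\<lambda>(a, x). R a x) (ord L)) - 1\<^sub>m d) Ls)) = 0 \<longleftrightarrow>
    (\<exists>L\<in>local_boxes n A X. \<exists>v\<in>carrier_vec d. v \<noteq> 0\<^sub>v d \<and> (\<forall>(a, x)\<in>I_L n A X L. R a x *\<^sub>v v = v))"
proof -
  let ?Rss = "map (\<lambda>L. map (\<lambda>(a, x). R a x) (ord L)) Ls"
  have "\<forall>Rs\<in>set ?Rss. \<forall>R'\<in>set Rs. orth_proj d R'"
    using R Ls ord by (fastforce simp: I_L_def)
  moreover have "(\<forall>R'\<in>set (map (\<lambda>(a, x). R a x) (ord L)). R' *\<^sub>v v = v) \<longleftrightarrow>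
      (\<forall>(a, x)\<in>I_L n A X L. R a x *\<^sub>v v = v)" if "L \<in> set Ls" for L v
    using that Ls ord by auto
  ultimately show ?thesis
    using det_mprod_projection_factors_eq_0_iff[of ?Rss d] Ls by (simp add: comp_def)
qed

theorem theorem1:
  fixes n d :: nat and A X :: "nat \<Rightarrow> nat"
    and \<sigma> R :: "nat list \<Rightarrow> nat list \<Rightarrow> complex mat"
    and Ls :: "nat list list list"
    and ord :: "nat list list \<Rightarrow> (nat list \<times> nat list) list"
  assumes "n \<ge> 1" "d \<ge> 1" "\<forall>i<n. A i \<ge> 1" "\<forall>i<n. X i \<ge> 1"
    and "no_signaling n A X d \<sigma>"
    and "\<forall>a\<in>tuples n A. \<forall>x\<in>tuples n X. is_orth_proj_onto d (R a x) (mat_image (\<sigma> a x))"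
    and "distinct Ls" "set Ls = local_boxes n A X"
    and "\<forall>L\<in>local_boxes n A X. distinct (ord L) \<and> set (ord L) = I_L n A X L"
  shows "on_edge n A X d \<sigma> \<longleftrightarrow>
    det (mprod d (map (\<lambda>L. mprod d (map (\<lambda>(a, x). R a x) (ord L)) - 1\<^sub>m d) Ls)) \<noteq> 0"
proof -
  have "\<forall>a\<in>tuples n A. \<forall>x\<in>tuples n X. orth_proj d (R a x)"
    using assms(6) by (simp add: is_orth_proj_onto_iff)
  then have "det (mprod d (map (\<lambda>L. mprod d (map (\<lambda>(a, x). R a x) (ord L)) - 1\<^sub>m d) Ls)) = 0 \<longleftrightarrow>
    (\<exists>L\<in>local_boxes n A X. \<exists>v\<in>carrier_vec d. v \<noteq> 0\<^sub>v d \<and> (\<forall>(a, x)\<in>I_L n A X L. R a x *\<^sub>v v = v))"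
    using assms(8,9) by (intro det_local_box_products_eq_0_iff) auto
  then show ?thesis
    using common_fixed_vector_imp_not_on_edge[OF assms(4,5,6)]
      not_on_edge_imp_common_fixed_vector[OF assms(5,6)] by blast
qed

end
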